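(* Let $r\ge2$ and $\Lambda=\Phi^+_{A_{r+1}}\setminus\{\varepsilon_{r+1}-\varepsilon_{r+2}\}$. Then \[K_\Lambda(\varepsilon_1+\varepsilon_2-\varepsilon_{r+1}-\varepsilon_{r+2})=\mathsf{js}(\langle1,1\rangle,\langle1,1\rangle,r).\]
   Context: $\Phi^+_{A_{r+1}}=\{\varepsilon_i-\varepsilon_j:1\le i<j\le r+2\}\subset\mathbb{R}^{r+2}$; for $\Lambda\subseteq\Phi^+_{A_{r+1}}$, $K_\Lambda(\mu)$ is the number of finite multisets of elements of $\Lambda$ summing to $\mu$. A juggling state is a finitely supported integer vector $\langle s_1,s_2,\dots\rangle$ indexed by heights (trailing zeros omitted). A juggling sequence of length $n$ from $\mathbf{a}$ to $\mathbf{b}$ is a sequence $(\mathbf{s}_0,\dots,\mathbf{s}_n)$ with $\mathbf{s}_0=\mathbf{a}$, $\mathbf{s}_n=\mathbf{b}$ such that for each $i$ there are nonnegative integers $c^{(i)}_k$ (finitely many nonzero) with $\sum_k c^{(i)}_k=(\mathbf{s}_{i-1})_1$ and $(\mathbf{s}_i)_k=(\mathbf{s}_{i-1})_{k+1}+c^{(i)}_k$ for all $k\ge1$; $\mathsf{js}(\mathbf{a},\mathbf{b},n)$ is the number of such sequences. *)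

theory Defs
  imports Complex_Main "HOL-Library.Multiset"
begin

text \<open>Vectors of R^(r+2) are represented as functions nat => real, coordinate i
  (1 <= i <= r+2) being the value at i; all other values are 0.\<close>

definition eps :: "nat \<Rightarrow> nat \<Rightarrow> real" where
  "eps i = (\<lambda>k. if k = i then 1 else 0)"

definition posroots_A :: "nat \<Rightarrow> (nat \<Rightarrow> real) set" where
  "posroots_A m = {(\<lambda>k. eps i k - eps j k) | i j. 1 \<le> i \<and> i < j \<and> j \<le> m + 1}"

definition vsum_mset :: "(nat \<Rightarrow> real) multiset \<Rightarrow> nat \<Rightarrow> real" where
  "vsum_mset M = (\<lambda>k. \<Sum>v\<in>#M. v k)"

definition kostant :: "(nat \<Rightarrow> real) set \<Rightarrow> (nat \<Rightarrow> real) \<Rightarrow> nat" where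
  "kostant L \<mu> = card {M. set_mset M \<subseteq> L \<and> vsum_mset M = \<mu>}"

text \<open>Juggling states: finitely supported integer vectors; we index 0-based,
  so s 0 is the entry at height 1, s k the entry at height k+1.\<close>
definition jstate :: "(nat \<Rightarrow> int) \<Rightarrow> bool" where
  "jstate s \<longleftrightarrow> finite {k. s k \<noteq> 0}"

definition jstep :: "(nat \<Rightarrow> int) \<Rightarrow> (nat \<Rightarrow> int) \<Rightarrow> bool" where
  "jstep s t \<longleftrightarrow> (\<exists>c :: nat \<Rightarrow> nat. finite {k. c k \<noteq> 0} \<and>
      int (sum c {k. c k \<noteq> 0}) = s 0 \<and> (\<forall>k. t k = s (Suc k) + int (c k)))"

definition js :: "(nat \<Rightarrow> int) \<Rightarrow> (nat \<Rightarrow> int) \<Rightarrow> nat \<Rightarrow> nat" where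
  "js a b n = card {ss. length ss = Suc n \<and> (\<forall>s\<in>set ss. jstate s) \<and>
      ss ! 0 = a \<and> ss ! n = b \<and> (\<forall>i<n. jstep (ss ! i) (ss ! Suc i))}"

definition state11 :: "nat \<Rightarrow> int" where
  "state11 = (\<lambda>k. if k < 2 then 1 else 0)"

end

theory Submission
  imports Defs
begin

text \<open>
  A multiset of roots \<open>\<epsilon>\<^sub>i - \<epsilon>\<^sub>j\<close> is a flow on the edges \<open>i \<rightarrow> j\<close> of the complete acyclic graph
  on \<open>1, \<dots>, r + 2\<close>, and it sums to \<open>\<epsilon>\<^sub>1 + \<epsilon>\<^sub>2 - \<epsilon>\<^sub>r\<^sub>+\<^sub>1 - \<epsilon>\<^sub>r\<^sub>+\<^sub>2\<close> iff the net
  outflow is 1 at vertices 1 and 2, 0 at \<open>3, \<dots>, r\<close> and \<open>-1\<close> at \<open>r + 1\<close> and \<open>r + 2\<close>.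
  Read vertex \<open>t\<close> as time \<open>t\<close> and an edge \<open>i \<rightarrow> j\<close> as a ball thrown at time \<open>i\<close> that lands at
  time \<open>j\<close>. The state after time \<open>t\<close> lists, by height, the balls still in the air; conservation
  at vertex \<open>t + 1\<close> says that as many balls are thrown at time \<open>t + 1\<close> as land then, i.e. that
  consecutive states form a juggling step. As the removed root \<open>\<epsilon>\<^sub>r\<^sub>+\<^sub>1 - \<epsilon>\<^sub>r\<^sub>+\<^sub>2\<close> is the only one
  with \<open>i > r\<close>, nothing is thrown after time \<open>r\<close>, and the state after time \<open>r\<close> is \<open>\<langle>1,1\<rangle>\<close> exactly
  when one ball lands at each of the times \<open>r + 1\<close>, \<open>r + 2\<close>. Conversely the throws are the
  differences of consecutive states.
\<close>

definition pos_root :: "nat \<Rightarrow> nat \<Rightarrow> nat \<Rightarrow> real" where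
  "pos_root i j = (\<lambda>k. eps i k - eps j k)"

lemma pos_root_inj:
  assumes "i < j" "i' < j'" "pos_root i j = pos_root i' j'"
  shows "i = i' \<and> j = j'"
proof -
  have "pos_root i j i = 1" "pos_root i j j = -1"
    using assms(1) by (simp_all add: pos_root_def eps_def)
  then have "pos_root i' j' i = 1" "pos_root i' j' j = -1"
    by (simp_all add: assms(3))
  then show ?thesis by (auto simp: pos_root_def eps_def split: if_splits)
qed

definition supported :: "(nat \<times> nat) set \<Rightarrow> (nat \<Rightarrow> nat \<Rightarrow> nat) \<Rightarrow> bool" where
  "supported E f \<longleftrightarrow> (\<forall>i j. (i, j) \<notin> E \<longrightarrow> f i j = 0)"

lemma supportedD: "supported E f \<Longrightarrow> f i j \<noteq> 0 \<Longrightarrow> (i, j) \<in> E"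
  unfolding supported_def by metis

definition netflow :: "(nat \<times> nat) set \<Rightarrow> (nat \<Rightarrow> nat \<Rightarrow> nat) \<Rightarrow> nat \<Rightarrow> real" where
  "netflow E f = (\<lambda>k. \<Sum>(i, j)\<in>E. real (f i j) * pos_root i j k)"

definition edge_counts :: "(nat \<times> nat) set \<Rightarrow> (nat \<Rightarrow> real) multiset \<Rightarrow> nat \<Rightarrow> nat \<Rightarrow> nat" where
  "edge_counts E M = (\<lambda>i j. if (i, j) \<in> E then count M (pos_root i j) else 0)"

definition edge_mset :: "(nat \<times> nat) set \<Rightarrow> (nat \<Rightarrow> nat \<Rightarrow> nat) \<Rightarrow> (nat \<Rightarrow> real) multiset" where
  "edge_mset E f = (\<Sum>(i, j)\<in>E. replicate_mset (f i j) (pos_root i j))"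

locale root_edges =
  fixes E :: "(nat \<times> nat) set"
  assumes finite_edges: "finite E" and edges_increasing: "\<And>i j. (i, j) \<in> E \<Longrightarrow> i < j"
begin

lemma count_edge_mset: "count (edge_mset E f) x = (\<Sum>(i, j)\<in>E. if x = pos_root i j then f i j else 0)"
  unfolding edge_mset_def by (simp add: count_sum case_prod_beta)

lemma inj_on_pos_root: "inj_on (case_prod pos_root) E"
  by (auto simp: inj_on_def dest: pos_root_inj edges_increasing)

lemma count_edge_mset_root:
  assumes "(i, j) \<in> E" shows "count (edge_mset E f) (pos_root i j) = f i j"
proof -
  have "count (edge_mset E f) (pos_root i j) = (\<Sum>e\<in>E. if e = (i, j) then f i j else 0)"
    unfolding count_edge_mset
  proof (rule sum.cong)
    fix e assume "e \<in> E"
    then show "(case e of (i', j') \<Rightarrow> if pos_root i j = pos_root i' j' then f i' j' else 0)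
             = (if e = (i, j) then f i j else 0)"
      using inj_on_eq_iff[OF inj_on_pos_root assms] by (auto split: prod.split)
  qed simp
  then show ?thesis using assms finite_edges by simp
qed

lemma set_edge_mset: "set_mset (edge_mset E f) \<subseteq> case_prod pos_root ` E"
proof
  fix x assume "x \<in># edge_mset E f"
  then have "(\<Sum>(i, j)\<in>E. if x = pos_root i j then f i j else 0) \<noteq> 0"
    by (simp flip: count_edge_mset)
  then obtain e where "e \<in> E" "(case e of (i, j) \<Rightarrow> if x = pos_root i j then f i j else 0) \<noteq> 0"
    by (rule sum.not_neutral_contains_not_neutral)
  then show "x \<in> case_prod pos_root ` E"
    by (cases e) (auto split: if_splits)
qed

lemma vsum_edge_mset: "vsum_mset (edge_mset E f) = netflow E f"
proof
  fix k
  have "vsum_mset (edge_mset E f) k = (\<Sum>(i, j)\<in>E. vsum_mset (replicate_mset (f i j) (pos_root i j)) k)"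
    unfolding edge_mset_def vsum_mset_def using finite_edges
    by (induction E rule: finite_induct) (auto simp: case_prod_beta)
  then show "vsum_mset (edge_mset E f) k = netflow E f k"
    by (simp add: vsum_mset_def netflow_def)
qed

lemma edge_mset_edge_counts:
  assumes "set_mset M \<subseteq> case_prod pos_root ` E"
  shows "edge_mset E (edge_counts E M) = M"
proof (rule multiset_eqI)
  fix x
  show "count (edge_mset E (edge_counts E M)) x = count M x"
  proof (cases "x \<in> case_prod pos_root ` E")
    case True
    then obtain i j where "(i, j) \<in> E" "x = pos_root i j" by auto
    then show ?thesis by (simp add: count_edge_mset_root edge_counts_def)
  next
    case False
    then show ?thesis using assms set_edge_mset
      by (metis count_eq_zero_iff subsetD)
  qed
qed

lemma edge_counts_edge_mset:
  assumes "supported E f" shows "edge_counts E (edge_mset E f) = f"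
  using assms by (auto simp: edge_counts_def supported_def count_edge_mset_root fun_eq_iff)

lemma kostant_eq_card_flows:
  "kostant (case_prod pos_root ` E) \<mu> = card {f. supported E f \<and> netflow E f = \<mu>}"
  unfolding kostant_def
proof (rule bij_betw_same_card[OF bij_betw_byWitness[where f' = "edge_mset E"]])
  show "edge_counts E ` {M. set_mset M \<subseteq> case_prod pos_root ` E \<and> vsum_mset M = \<mu>}
          \<subseteq> {f. supported E f \<and> netflow E f = \<mu>}"
  proof (intro image_subsetI CollectI conjI)
    fix M assume "M \<in> {M. set_mset M \<subseteq> case_prod pos_root ` E \<and> vsum_mset M = \<mu>}"
    then have M: "set_mset M \<subseteq> case_prod pos_root ` E" "vsum_mset M = \<mu>" by simp_all
    show "supported E (edge_counts E M)"
      by (simp add: supported_def edge_counts_def)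
    show "netflow E (edge_counts E M) = \<mu>"
      using M by (simp add: edge_mset_edge_counts flip: vsum_edge_mset)
  qed
  show "edge_mset E ` {f. supported E f \<and> netflow E f = \<mu>}
          \<subseteq> {M. set_mset M \<subseteq> case_prod pos_root ` E \<and> vsum_mset M = \<mu>}"
    using set_edge_mset vsum_edge_mset by auto
qed (auto simp: edge_mset_edge_counts edge_counts_edge_mset)

end

definition outflow :: "nat set \<Rightarrow> (nat \<Rightarrow> nat \<Rightarrow> nat) \<Rightarrow> nat \<Rightarrow> nat" where
  "outflow V f k = (\<Sum>j\<in>V. f k j)"

definition inflow :: "nat set \<Rightarrow> (nat \<Rightarrow> nat \<Rightarrow> nat) \<Rightarrow> nat \<Rightarrow> nat" where
  "inflow V f k = (\<Sum>i\<in>V. f i k)"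

lemma netflow_eq_outflow_minus_inflow:
  assumes V: "finite V" and E: "E \<subseteq> V \<times> V" and f: "supported E f"
  shows "netflow E f k = real (outflow V f k) - real (inflow V f k)"
proof -
  have outside: "f i j = 0" if "i \<notin> V \<or> j \<notin> V" for i j
    using E f that by (auto simp: supported_def)
  have "netflow E f k = (\<Sum>(i, j)\<in>V \<times> V. real (f i j) * pos_root i j k)"
    unfolding netflow_def using V E f
    by (intro sum.mono_neutral_left) (auto simp: supported_def)
  also have "\<dots> = (\<Sum>i\<in>V. \<Sum>j\<in>V. real (f i j) * eps i k)
                  - (\<Sum>j\<in>V. \<Sum>i\<in>V. real (f i j) * eps j k)"
    by (subst (2) sum.swap)
      (simp add: sum.cartesian_product[symmetric] pos_root_def right_diff_distrib sum_subtractf)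
  also have "(\<Sum>i\<in>V. \<Sum>j\<in>V. real (f i j) * eps i k)
      = (\<Sum>i\<in>V. if i = k then real (outflow V f i) else 0)"
    by (rule sum.cong) (simp_all add: eps_def outflow_def)
  also have "(\<Sum>j\<in>V. \<Sum>i\<in>V. real (f i j) * eps j k)
      = (\<Sum>j\<in>V. if j = k then real (inflow V f j) else 0)"
    by (rule sum.cong) (simp_all add: eps_def inflow_def)
  also have "(\<Sum>i\<in>V. if i = k then real (outflow V f i) else 0)
      - (\<Sum>j\<in>V. if j = k then real (inflow V f j) else 0) = real (outflow V f k) - real (inflow V f k)"
    using V outside by (simp add: outflow_def inflow_def)
  finally show ?thesis .
qed

definition edges :: "nat \<Rightarrow> (nat \<times> nat) set" where
  "edges r = {(i, j). 1 \<le> i \<and> i < j \<and> j \<le> r + 2 \<and> i \<le> r}"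

lemma edges_subset: "edges r \<subseteq> {1..r + 2} \<times> {1..r + 2}"
  by (auto simp: edges_def)

interpretation edges: root_edges "edges r"
proof
  show "finite (edges r)" by (rule finite_subset[OF edges_subset]) simp
  show "i < j" if "(i, j) \<in> edges r" for i j using that by (simp add: edges_def)
qed

lemma supported_edgesD:
  "supported (edges r) f \<Longrightarrow> f i j \<noteq> 0 \<Longrightarrow> 1 \<le> i \<and> i < j \<and> j \<le> r + 2 \<and> i \<le> r"
  using supportedD[of "edges r" f i j] by (simp add: edges_def)

lemma posroots_A_eq: "posroots_A m = {pos_root i j | i j. 1 \<le> i \<and> i < j \<and> j \<le> m + 1}"
  by (simp add: posroots_A_def pos_root_def)

lemma posroots_minus_last_eq:
  "posroots_A (r + 1) - {pos_root (r + 1) (r + 2)} = case_prod pos_root ` edges r"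
proof (intro equalityI subsetI)
  fix x assume "x \<in> posroots_A (r + 1) - {pos_root (r + 1) (r + 2)}"
  then obtain i j where ij: "1 \<le> i" "i < j" "j \<le> r + 2" "x = pos_root i j"
    and last: "x \<noteq> pos_root (r + 1) (r + 2)"
    by (auto simp: posroots_A_eq)
  have "i \<le> r"
  proof (rule ccontr)
    assume "\<not> i \<le> r"
    with ij have "i = r + 1" "j = r + 2" by auto
    with ij last show False by simp
  qed
  with ij show "x \<in> case_prod pos_root ` edges r" by (force simp: edges_def)
next
  fix x assume "x \<in> case_prod pos_root ` edges r"
  then obtain i j where ij: "1 \<le> i" "i < j" "j \<le> r + 2" "i \<le> r" "x = pos_root i j"
    by (auto simp: edges_def)
  then have "x \<noteq> pos_root (r + 1) (r + 2)" using pos_root_inj[of i j "r + 1" "r + 2"] by auto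
  with ij show "x \<in> posroots_A (r + 1) - {pos_root (r + 1) (r + 2)}"
    unfolding posroots_A_eq by auto
qed

definition target_weight :: "nat \<Rightarrow> nat \<Rightarrow> real" where
  "target_weight r = (\<lambda>k. eps 1 k + eps 2 k - eps (r + 1) k - eps (r + 2) k)"

lemma outflow_edges_eq_0:
  assumes "supported (edges r) f" "k = 0 \<or> r < k" shows "outflow {1..r + 2} f k = 0"
proof -
  have "f k j = 0" for j
    using supported_edgesD[OF assms(1), of k j] assms(2) by linarith
  then show ?thesis by (simp add: outflow_def)
qed

lemma inflow_edges_eq_0:
  assumes "supported (edges r) f" "k \<le> 1 \<or> r + 2 < k" shows "inflow {1..r + 2} f k = 0"
proof -
  have "f i k = 0" for i
    using supported_edgesD[OF assms(1), of i k] assms(2) by linarith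
  then show ?thesis by (simp add: inflow_def)
qed

lemma netflow_edges:
  assumes "supported (edges r) f"
  shows "netflow (edges r) f k = real (outflow {1..r + 2} f k) - real (inflow {1..r + 2} f k)"
  using netflow_eq_outflow_minus_inflow[OF _ edges_subset assms] by simp

lemma netflow_eq_target_weight_at_inner:
  assumes f: "supported (edges r) f" and t: "t < r"
  shows "netflow (edges r) f (Suc t) = target_weight r (Suc t) \<longleftrightarrow>
    int (outflow {1..r + 2} f (Suc t)) = state11 t + int (inflow {1..r + 2} f (Suc t))"
proof -
  have "target_weight r (Suc t) = real_of_int (state11 t)"
    using t by (simp add: target_weight_def eps_def state11_def)
  then show ?thesis
    by (simp add: netflow_edges[OF f] flip: of_int_eq_iff[where 'a = real]) linarith
qed

lemma netflow_eq_target_weight_at_last: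
  assumes f: "supported (edges r) f" and r: "2 \<le> r" and k: "k = r + 1 \<or> k = r + 2"
  shows "netflow (edges r) f k = target_weight r k \<longleftrightarrow> inflow {1..r + 2} f k = 1"
proof -
  have "target_weight r k = -1"
    using r k by (auto simp: target_weight_def eps_def)
  moreover have "outflow {1..r + 2} f k = 0"
    by (rule outflow_edges_eq_0[OF f]) (use k in linarith)
  ultimately show ?thesis by (simp add: netflow_edges[OF f])
qed

lemma netflow_eq_target_weight_at_outer:
  assumes f: "supported (edges r) f" and k: "k = 0 \<or> r + 2 < k"
  shows "netflow (edges r) f k = target_weight r k"
  using outflow_edges_eq_0[OF f] inflow_edges_eq_0[OF f] k
  by (auto simp: netflow_edges[OF f] target_weight_def eps_def)

lemma netflow_eq_target_weight_iff:
  assumes f: "supported (edges r) f" and r: "2 \<le> r"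
  shows "netflow (edges r) f = target_weight r \<longleftrightarrow>
    inflow {1..r + 2} f (r + 1) = 1 \<and> inflow {1..r + 2} f (r + 2) = 1 \<and>
    (\<forall>t<r. int (outflow {1..r + 2} f (Suc t)) = state11 t + int (inflow {1..r + 2} f (Suc t)))"
proof -
  have vertices: "(\<forall>k. P k) \<longleftrightarrow> P (r + 1) \<and> P (r + 2) \<and> (\<forall>t<r. P (Suc t))"
    if "\<And>k. k = 0 \<or> r + 2 < k \<Longrightarrow> P k" for P
  proof (intro iffI allI)
    fix k assume P: "P (r + 1) \<and> P (r + 2) \<and> (\<forall>t<r. P (Suc t))"
    consider "k = 0 \<or> r + 2 < k" | "k = r + 1" | "k = r + 2" | "1 \<le> k \<and> k \<le> r"
      by linarith
    then show "P k"
    proof cases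
      case 4
      then have "k = Suc (k - 1)" "k - 1 < r" by arith+
      with P show ?thesis by metis
    qed (use P that in auto)
  qed simp
  show ?thesis
    unfolding fun_eq_iff
    by (subst vertices) (simp_all add: netflow_eq_target_weight_at_outer[OF f]
        netflow_eq_target_weight_at_last[OF f r] netflow_eq_target_weight_at_inner[OF f])
qed

lemma jstep_shift_add_iff:
  assumes "finite {k. c k \<noteq> 0}"
  shows "jstep s (\<lambda>k. s (Suc k) + int (c k)) \<longleftrightarrow> int (sum c {k. c k \<noteq> 0}) = s 0"
proof
  assume "jstep s (\<lambda>k. s (Suc k) + int (c k))"
  then obtain c' :: "nat \<Rightarrow> nat" where "int (sum c' {k. c' k \<noteq> 0}) = s 0"
    and "\<forall>k. s (Suc k) + int (c k) = s (Suc k) + int (c' k)"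
    unfolding jstep_def by blast
  then show "int (sum c {k. c k \<noteq> 0}) = s 0" by (simp add: fun_eq_iff[symmetric])
qed (use assms in \<open>auto simp: jstep_def\<close>)

text \<open>Index \<open>k\<close> is height \<open>k + 1\<close>: the initial balls still up plus the balls thrown at times
  \<open>1, \<dots>, t\<close> that land at time \<open>t + k + 1\<close>.\<close>
definition flow_state :: "(nat \<Rightarrow> nat \<Rightarrow> nat) \<Rightarrow> nat \<Rightarrow> nat \<Rightarrow> int" where
  "flow_state f t = (\<lambda>k. state11 (t + k) + (\<Sum>i\<in>{1..t}. int (f i (t + k + 1))))"

lemma flow_state_0: "flow_state f 0 = state11"
  by (simp add: flow_state_def)

lemma flow_state_Suc: "flow_state f (Suc t) k = flow_state f t (Suc k) + int (f (Suc t) (t + k + 2))"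
  by (simp add: flow_state_def add_ac)

lemma flow_state_eq_0:
  assumes "supported (edges r) f" "r + 2 \<le> k" shows "flow_state f t k = 0"
proof -
  have "f i (t + k + 1) = 0" for i
    using supported_edgesD[OF assms(1), of i "t + k + 1"] assms(2) by linarith
  then show ?thesis using assms(2) by (simp add: flow_state_def state11_def)
qed

lemma jstate_flow_state: "supported (edges r) f \<Longrightarrow> jstate (flow_state f t)"
  unfolding jstate_def
  by (rule finite_subset[of _ "{..<r + 2}"]) (auto dest: flow_state_eq_0 simp: not_less)

lemma flow_state_height_1:
  assumes f: "supported (edges r) f" and t: "t < r"
  shows "flow_state f t 0 = state11 t + int (inflow {1..r + 2} f (Suc t))"
proof -
  have "(\<Sum>i\<in>{1..t}. f i (Suc t)) = inflow {1..r + 2} f (Suc t)"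
    unfolding inflow_def using supported_edgesD[OF f] t
    by (intro sum.mono_neutral_left) fastforce+
  then show ?thesis by (simp add: flow_state_def flip: of_nat_sum)
qed

lemma flow_state_final_iff:
  assumes f: "supported (edges r) f" and r: "2 \<le> r"
  shows "flow_state f r = state11 \<longleftrightarrow> inflow {1..r + 2} f (r + 1) = 1 \<and> inflow {1..r + 2} f (r + 2) = 1"
proof -
  have state: "flow_state f r k = int (inflow {1..r + 2} f (r + k + 1))" for k
  proof -
    have "(\<Sum>i\<in>{1..r}. f i (r + k + 1)) = inflow {1..r + 2} f (r + k + 1)"
      unfolding inflow_def using supported_edgesD[OF f]
      by (intro sum.mono_neutral_left) fastforce+
    then show ?thesis using r by (simp add: flow_state_def state11_def flip: of_nat_sum)
  qed
  have high: "flow_state f r k = 0" if "2 \<le> k" for k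
    using state[of k] inflow_edges_eq_0[OF f, of "r + k + 1"] that by simp
  have "flow_state f r = state11 \<longleftrightarrow> flow_state f r 0 = 1 \<and> flow_state f r 1 = 1"
  proof
    assume "flow_state f r 0 = 1 \<and> flow_state f r 1 = 1"
    then show "flow_state f r = state11"
      using high by (auto simp: fun_eq_iff state11_def less_2_cases_iff)
  qed (simp add: state11_def)
  then show ?thesis using state[of 0] state[of 1] by simp
qed

lemma jstep_flow_state_iff:
  assumes f: "supported (edges r) f" and t: "t < r"
  shows "jstep (flow_state f t) (flow_state f (Suc t)) \<longleftrightarrow> int (outflow {1..r + 2} f (Suc t)) = flow_state f t 0"
proof -
  define c where "c k = f (Suc t) (t + k + 2)" for k
  define S where "S = {j. f (Suc t) j \<noteq> 0}"
  have S: "Suc t < j \<and> j \<le> r + 2" if "j \<in> S" for j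
    using supported_edgesD[OF f] that by (auto simp: S_def)
  have image: "(\<lambda>k. t + k + 2) ` {k. c k \<noteq> 0} = S"
  proof (intro equalityI subsetI)
    fix j assume j: "j \<in> S"
    then have j_eq: "j = t + (j - t - 2) + 2" using S[OF j] by linarith
    moreover have "c (j - t - 2) \<noteq> 0"
      using j unfolding c_def S_def by (simp only: flip: j_eq) simp
    ultimately show "j \<in> (\<lambda>k. t + k + 2) ` {k. c k \<noteq> 0}" by blast
  qed (auto simp: S_def c_def)
  have inj: "inj_on (\<lambda>k. t + k + 2) {k. c k \<noteq> 0}"
    by (simp add: inj_on_def)
  have "finite S"
    by (rule finite_subset[of _ "{..r + 2}"]) (use S in auto)
  then have finite_c: "finite {k. c k \<noteq> 0}"
    using finite_imageD[OF _ inj] image by simp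
  have "sum c {k. c k \<noteq> 0} = sum (f (Suc t)) ((\<lambda>k. t + k + 2) ` {k. c k \<noteq> 0})"
    unfolding sum.reindex[OF inj] by (simp add: c_def o_def)
  also have "\<dots> = sum (f (Suc t)) S"
    by (simp only: image)
  also have "\<dots> = outflow {1..r + 2} f (Suc t)"
  proof -
    have "S = {1..r + 2} - {j. f (Suc t) j = 0}"
    proof (intro equalityI subsetI)
      fix j assume "j \<in> S"
      then show "j \<in> {1..r + 2} - {j. f (Suc t) j = 0}" using S[of j] by (simp add: S_def)
    qed (simp add: S_def)
    then show ?thesis by (simp add: outflow_def sum.setdiff_irrelevant)
  qed
  finally have "sum c {k. c k \<noteq> 0} = outflow {1..r + 2} f (Suc t)" .
  moreover have "flow_state f (Suc t) = (\<lambda>k. flow_state f t (Suc k) + int (c k))"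
    by (simp add: fun_eq_iff flow_state_Suc c_def)
  ultimately show ?thesis by (simp add: jstep_shift_add_iff[OF finite_c])
qed

definition jseqs :: "(nat \<Rightarrow> int) \<Rightarrow> (nat \<Rightarrow> int) \<Rightarrow> nat \<Rightarrow> (nat \<Rightarrow> int) list set" where
  "jseqs a b n = {ss. length ss = Suc n \<and> (\<forall>s\<in>set ss. jstate s) \<and>
      ss ! 0 = a \<and> ss ! n = b \<and> (\<forall>i<n. jstep (ss ! i) (ss ! Suc i))}"

lemma js_eq_card_jseqs: "js a b n = card (jseqs a b n)"
  by (simp add: js_def jseqs_def)

definition flow_seq :: "nat \<Rightarrow> (nat \<Rightarrow> nat \<Rightarrow> nat) \<Rightarrow> (nat \<Rightarrow> int) list" where
  "flow_seq r f = map (flow_state f) [0..<Suc r]"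

lemma nth_flow_seq: "t \<le> r \<Longrightarrow> flow_seq r f ! t = flow_state f t"
  unfolding flow_seq_def by (simp del: upt_Suc add: nth_map_upt)

lemma flow_seq_in_jseqs_iff:
  assumes f: "supported (edges r) f" and r: "2 \<le> r"
  shows "flow_seq r f \<in> jseqs state11 state11 r \<longleftrightarrow> netflow (edges r) f = target_weight r"
proof -
  have "flow_seq r f \<in> jseqs state11 state11 r \<longleftrightarrow>
      flow_state f r = state11 \<and> (\<forall>t<r. jstep (flow_state f t) (flow_state f (Suc t)))"
  proof -
    have "length (flow_seq r f) = Suc r" "\<forall>s\<in>set (flow_seq r f). jstate s"
      using jstate_flow_state[OF f] by (auto simp: flow_seq_def simp del: upt_Suc)
    then show ?thesis
      by (simp add: jseqs_def nth_flow_seq flow_state_0)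
  qed
  also have "\<dots> \<longleftrightarrow> netflow (edges r) f = target_weight r"
    using netflow_eq_target_weight_iff[OF f r] flow_state_final_iff[OF f r]
      jstep_flow_state_iff[OF f] flow_state_height_1[OF f] by simp
  finally show ?thesis .
qed

lemma jseqs_shift_le:
  assumes "ss \<in> jseqs a b n" "t < n" shows "(ss ! t) (Suc k) \<le> (ss ! Suc t) k"
proof -
  obtain c :: "nat \<Rightarrow> nat" where "\<forall>k. (ss ! Suc t) k = (ss ! t) (Suc k) + int (c k)"
    using assms unfolding jseqs_def jstep_def by blast
  then show ?thesis by simp
qed

lemma jseqs_nonneg:
  assumes ss: "ss \<in> jseqs a b n" and a: "\<And>k. 0 \<le> a k" and t: "t \<le> n"
  shows "0 \<le> (ss ! t) k"
  using t
proof (induction t arbitrary: k)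
  case 0
  then show ?case using ss a by (simp add: jseqs_def)
next
  case (Suc t)
  then have "0 \<le> (ss ! t) (Suc k)" by simp
  also have "\<dots> \<le> (ss ! Suc t) k" using jseqs_shift_le[OF ss] Suc.prems by simp
  finally show ?case .
qed

lemma jseqs_le_final:
  assumes ss: "ss \<in> jseqs a b n" and d: "d \<le> n"
  shows "(ss ! (n - d)) (k + d) \<le> b k"
  using d
proof (induction d)
  case 0
  then show ?case using ss by (simp add: jseqs_def)
next
  case (Suc d)
  then have "(ss ! (n - Suc d)) (Suc (k + d)) \<le> (ss ! Suc (n - Suc d)) (k + d)"
    by (intro jseqs_shift_le[OF ss]) simp
  also have "Suc (n - Suc d) = n - d" using Suc.prems by simp
  also have "(ss ! (n - d)) (k + d) \<le> b k" using Suc by simp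
  finally show ?case by simp
qed

lemma jseqs_eq_0:
  assumes ss: "ss \<in> jseqs a b n" and a: "\<And>k. 0 \<le> a k" and b: "\<And>k. m \<le> k \<Longrightarrow> b k = 0"
    and t: "t \<le> n" and k: "n + m \<le> k + t"
  shows "(ss ! t) k = 0"
proof -
  have "(ss ! (n - (n - t))) (k - (n - t) + (n - t)) \<le> b (k - (n - t))"
    using jseqs_le_final[OF ss] by simp
  then have "(ss ! t) k \<le> 0" using t k b[of "k - (n - t)"] by simp
  with jseqs_nonneg[OF ss a t, of k] show ?thesis by simp
qed

text \<open>The balls thrown at time \<open>i\<close> to land at time \<open>j\<close>, read off from the states before and
  after time \<open>i\<close>.\<close>
definition throws :: "nat \<Rightarrow> (nat \<Rightarrow> int) list \<Rightarrow> nat \<Rightarrow> nat \<Rightarrow> nat" where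
  "throws r ss = (\<lambda>i j. if (i, j) \<in> edges r then nat ((ss ! i) (j - i - 1) - (ss ! (i - 1)) (j - i)) else 0)"

lemma supported_throws: "supported (edges r) (throws r ss)"
  by (simp add: supported_def throws_def)

lemma throws_flow_seq:
  assumes f: "supported (edges r) f" shows "throws r (flow_seq r f) = f"
proof (intro ext)
  fix i j
  show "throws r (flow_seq r f) i j = f i j"
  proof (cases "(i, j) \<in> edges r")
    case True
    then have ij: "1 \<le> i" "i < j" "i \<le> r" by (simp_all add: edges_def)
    define t k where "t = i - 1" and "k = j - i - 1"
    have tk: "i = Suc t" "t < r" "j = t + k + 2" using ij by (simp_all add: t_def k_def)
    have "throws r (flow_seq r f) i j = nat (flow_state f (Suc t) k - flow_state f t (Suc k))"
      using True tk by (simp add: throws_def nth_flow_seq)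
    then show ?thesis using tk by (simp add: flow_state_Suc)
  next
    case False
    with f show ?thesis by (simp add: throws_def supported_def)
  qed
qed

lemma flow_state_throws:
  assumes ss: "ss \<in> jseqs state11 state11 r" and t: "t \<le> r"
  shows "flow_state (throws r ss) t = ss ! t"
  using t
proof (induction t)
  case 0
  then show ?case using ss by (simp add: flow_state_0 jseqs_def)
next
  case (Suc t)
  have vanish: "(ss ! t') k' = 0" if "t' \<le> r" "r + 2 \<le> k' + t'" for t' k'
    using jseqs_eq_0[OF ss _ _ that] by (simp add: state11_def)
  show ?case
  proof
    fix k
    have "flow_state (throws r ss) (Suc t) k = (ss ! t) (Suc k) + int (throws r ss (Suc t) (t + k + 2))"
      using Suc by (simp add: flow_state_Suc)
    also have "\<dots> = (ss ! Suc t) k"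
    proof (cases "t + k + 2 \<le> r + 2")
      case True
      with Suc.prems have "throws r ss (Suc t) (t + k + 2) = nat ((ss ! Suc t) k - (ss ! t) (Suc k))"
        by (simp add: throws_def edges_def)
      then show ?thesis using jseqs_shift_le[OF ss, of t k] Suc.prems by simp
    next
      case False
      then show ?thesis
        using vanish[of "Suc t" k] vanish[of t "Suc k"] Suc.prems by (simp add: throws_def edges_def)
    qed
    finally show "flow_state (throws r ss) (Suc t) k = (ss ! Suc t) k" .
  qed
qed

lemma flow_seq_throws: "ss \<in> jseqs state11 state11 r \<Longrightarrow> flow_seq r (throws r ss) = ss"
  by (intro nth_equalityI) (auto simp: jseqs_def flow_seq_def flow_state_throws simp del: upt_Suc)

lemma bij_betw_flow_seq:
  assumes r: "2 \<le> r"
  shows "bij_betw (flow_seq r) {f. supported (edges r) f \<and> netflow (edges r) f = target_weight r}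
    (jseqs state11 state11 r)"
proof (rule bij_betw_byWitness[where f' = "throws r"])
  show "flow_seq r ` {f. supported (edges r) f \<and> netflow (edges r) f = target_weight r}
      \<subseteq> jseqs state11 state11 r"
    using flow_seq_in_jseqs_iff[OF _ r] by auto
  show "throws r ` jseqs state11 state11 r
      \<subseteq> {f. supported (edges r) f \<and> netflow (edges r) f = target_weight r}"
  proof (intro image_subsetI CollectI conjI supported_throws)
    fix ss assume "ss \<in> jseqs state11 state11 r"
    then have "flow_seq r (throws r ss) \<in> jseqs state11 state11 r"
      by (simp add: flow_seq_throws)
    then show "netflow (edges r) (throws r ss) = target_weight r"
      using flow_seq_in_jseqs_iff[OF supported_throws r] by blast
  qed
qed (auto simp: throws_flow_seq flow_seq_throws)

theorem mainTheorem14: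
  fixes r :: nat
  assumes "r \<ge> 2"
  shows "kostant (posroots_A (r + 1) - {(\<lambda>k. eps (r + 1) k - eps (r + 2) k)})
           (\<lambda>k. eps 1 k + eps 2 k - eps (r + 1) k - eps (r + 2) k)
         = js state11 state11 r"
proof -
  have "kostant (posroots_A (r + 1) - {(\<lambda>k. eps (r + 1) k - eps (r + 2) k)})
           (\<lambda>k. eps 1 k + eps 2 k - eps (r + 1) k - eps (r + 2) k)
      = kostant (case_prod pos_root ` edges r) (target_weight r)"
    using posroots_minus_last_eq[of r] by (simp add: pos_root_def target_weight_def)
  also have "\<dots> = card {f. supported (edges r) f \<and> netflow (edges r) f = target_weight r}"
    by (rule edges.kostant_eq_card_flows)
  also have "\<dots> = card (jseqs state11 state11 r)"
    by (rule bij_betw_same_card[OF bij_betw_flow_seq[OF assms]])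
  also have "\<dots> = js state11 state11 r"
    by (simp add: js_eq_card_jseqs)
  finally show ?thesis .
qed

end
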